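(* Let $N\ge3$. For $p>p_{\rm S}=\frac{N+2}{N-2}$ let $\underline\Theta=\underline\Theta(p)\in(0,\pi)$ be the number such that problem (P$_\Theta$) has no regular solution for $\Theta\in(0,\underline\Theta)$ and has a regular solution for every $\Theta\in(\underline\Theta,\pi)$, and let $\Theta^*=\Theta^*(p)$ be as in the context. Then $\underline\Theta(p)\to\pi$ as $p\to\infty$; since $\underline\Theta\le\Theta^*$, also $\Theta^*(p)\to\pi$ as $p\to\infty$. Moreover, when $N=3$, for every $p\ge5$ problem (P$_\Theta$) has no regular solution for $\Theta\in(0,\pi-\arcsin\frac{4}{p-1}]$; in particular $\underline\Theta\ge\pi-\arcsin\frac{4}{p-1}$ for $p>5$.
   Context: For $\Theta\in(0,\pi)$, problem (P$_\Theta$) is: $U''+(N-1)\frac{\cos\theta}{\sin\theta}U'+U^p=0$ on $(0,\Theta)$, $U(\Theta)=0$, $U>0$ on $[0,\Theta)$; a regular solution is one with $U\in C^2[0,\Theta]$, $U'(0)=0$. $\Theta^*\in(0,\pi)$ is the first positive zero of the unique solution $U^*$ of $U''+(N-1)\frac{\cos\theta}{\sin\theta}U'+|U|^{p-1}U=0$ with $U^*(\theta)=a(\cos\frac\theta2)^{-(N-2)}(2\tan\frac\theta2)^{-\mu}(1+o(1))$ as $\theta\downarrow0$, $\mu=\frac{2}{p-1}$, $a=\{\mu(N-2-\mu)\}^{\mu/2}$. *)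

theory Defs
  imports "HOL-Analysis.Analysis" "HOL-Library.Landau_Symbols"
begin

definition pS :: "real \<Rightarrow> real" where
  "pS N = (N + 2) / (N - 2)"

definition regular_solution :: "real \<Rightarrow> real \<Rightarrow> real \<Rightarrow> (real \<Rightarrow> real) \<Rightarrow> bool" where
  "regular_solution N p \<Theta> U \<longleftrightarrow>
     (\<exists>U1 U2.
        (\<forall>\<theta>\<in>{0..\<Theta>}. (U has_real_derivative U1 \<theta>) (at \<theta> within {0..\<Theta>}) \<and>
                          (U1 has_real_derivative U2 \<theta>) (at \<theta> within {0..\<Theta>})) \<and>
        continuous_on {0..\<Theta>} U2 \<and>
        U1 0 = 0 \<and>
        (\<forall>\<theta>\<in>{0<..<\<Theta>}. U2 \<theta> + (N - 1) * (cos \<theta> / sin \<theta>) * U1 \<theta> + U \<theta> powr p = 0)) \<and>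
     U \<Theta> = 0 \<and> (\<forall>\<theta>\<in>{0..<\<Theta>}. U \<theta> > 0)"

definition singular_solution :: "real \<Rightarrow> real \<Rightarrow> (real \<Rightarrow> real) \<Rightarrow> bool" where
  "singular_solution N p U \<longleftrightarrow>
     (let \<mu> = 2 / (p - 1); a = (\<mu> * (N - 2 - \<mu>)) powr (\<mu> / 2) in
      (\<exists>U1 U2. \<forall>\<theta>\<in>{0<..<pi}.
          (U has_real_derivative U1 \<theta>) (at \<theta>) \<and>
          (U1 has_real_derivative U2 \<theta>) (at \<theta>) \<and>
          U2 \<theta> + (N - 1) * (cos \<theta> / sin \<theta>) * U1 \<theta> + \<bar>U \<theta>\<bar> powr (p - 1) * U \<theta> = 0) \<and>
      U \<sim>[at_right 0] (\<lambda>\<theta>. a * (cos (\<theta> / 2)) powr (-(N - 2)) * (2 * tan (\<theta> / 2)) powr (-\<mu>)))"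

definition first_zero :: "(real \<Rightarrow> real) \<Rightarrow> real \<Rightarrow> bool" where
  "first_zero U T \<longleftrightarrow> T \<in> {0<..<pi} \<and> U T = 0 \<and> (\<forall>\<theta>\<in>{0<..<T}. U \<theta> \<noteq> 0)"

end

theory Submission
  imports Defs
begin

(*
  The obstruction is a Pohozaev-type functional. With n = N - 1 and the weight
  g(t) = sin 2t + l sin^n t, put
    P(t) = sin^n t * (g(t) * (U'^2/2 + U^(p+1)/(p+1)) + U U').
  Along a positive solution
    P' = sin^n t * ((2 - n) cos^2 t U'^2 + U^(p+1) (C(t) - (p+1))/(p+1)),
    C(t) = 2(n+1) cos^2 t - 2 sin^2 t + 2 l n sin^(n-1) t cos t,
  so P decreases wherever C <= p + 1. A regular solution on [0, Theta] has P(0) = 0, and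
  P(Theta) >= 0 as soon as g(Theta) >= 0: a contradiction. Taking l = 2 / sin^(n-1) delta makes
  g >= 0 on (0, pi - delta] and bounds C independently of p, so for large p no regular solution
  has Theta <= pi - delta. For N = 3 the choice l = sqrt((p-5)(p+3))/2 turns p + 1 - C into a
  perfect square, which gives the explicit bound pi - arcsin (4/(p-1)).

  For the singular solution U^star the argument runs on (0, Theta^star): there P decreases strictly
  to P(Theta^star) >= 0, while U^star = O(theta^(-2/(p-1))) near 0 and p > p_S force P to be arbitrarily
  small at points arbitrarily close to 0.
*)

lemma DERIV_nonpos_imp_strict_decreasing_open:
  fixes f f' :: "real \<Rightarrow> real"
  assumes cont: "continuous_on {a..b} f"
    and der: "\<And>x. a < x \<Longrightarrow> x < b \<Longrightarrow> (f has_real_derivative f' x) (at x)"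
    and nonpos: "\<And>x. a < x \<Longrightarrow> x < b \<Longrightarrow> f' x \<le> 0"
    and t0: "a < t0" "t0 < b" and neg: "f' t0 < 0"
  shows "f b < f a"
proof (rule ccontr)
  assume "\<not> f b < f a"
  have decreasing: "f y \<le> f x" if "a \<le> x" "x \<le> y" "y \<le> b" for x y
  proof (rule DERIV_nonpos_imp_decreasing_open[OF that(2)])
    fix z assume "x < z" "z < y"
    then have "a < z" "z < b" using that by auto
    then show "\<exists>d. (f has_real_derivative d) (at z) \<and> d \<le> 0"
      using der nonpos by blast
  qed (use that in \<open>auto intro: continuous_on_subset[OF cont]\<close>)
  have const: "f x = f a" if "a < x" "x < b" for x
    using decreasing[of a x] decreasing[of x b] that \<open>\<not> f b < f a\<close> by auto
  have "((\<lambda>_. f a) has_real_derivative f' t0) (at t0)"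
    by (rule has_field_derivative_transform_within_open[OF der[OF t0], of "{a<..<b}"])
      (use t0 const in auto)
  then have "f' t0 = 0"
    using DERIV_unique DERIV_const by blast
  with neg show False by simp
qed

lemma exists_derivative_bound:
  fixes U U' :: "real \<Rightarrow> real" and A \<mu> \<theta> :: real
  assumes \<theta>: "0 < \<theta>" and \<mu>: "\<mu> \<ge> 0"
    and der: "\<And>x. \<theta> / 2 \<le> x \<Longrightarrow> x \<le> \<theta> \<Longrightarrow> (U has_real_derivative U' x) (at x)"
    and bound: "\<And>x. x \<in> {\<theta> / 2, \<theta>} \<Longrightarrow> 0 < U x \<and> U x \<le> A * x powr (- \<mu>)"
  obtains \<xi> where "\<theta> / 2 < \<xi>" "\<xi> < \<theta>" "\<bar>U' \<xi>\<bar> \<le> 2 * A * (1 + 2 powr \<mu>) * \<xi> powr (- \<mu>) / \<xi>"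
proof -
  have "continuous_on {\<theta> / 2..\<theta>} U"
    by (intro continuous_at_imp_continuous_on ballI DERIV_isCont[OF der]) auto
  moreover have "U differentiable (at x)" if "\<theta> / 2 < x" "x < \<theta>" for x
    using der[of x] that unfolding real_differentiable_def by auto
  ultimately obtain d \<xi> where \<xi>: "\<theta> / 2 < \<xi>" "\<xi> < \<theta>" "DERIV U \<xi> :> d"
      "U \<theta> - U (\<theta> / 2) = (\<theta> - \<theta> / 2) * d"
    using MVT[of "\<theta> / 2" \<theta> U] \<theta> by auto
  have d: "d = U' \<xi>" using DERIV_unique[OF \<xi>(3) der[of \<xi>]] \<xi> by auto
  have "0 < A * \<theta> powr (- \<mu>)" using bound[of \<theta>] by auto
  then have A: "A \<ge> 0" using \<theta> by (simp add: zero_less_mult_iff)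
  have "(\<theta> / 2) powr (- \<mu>) \<le> (\<xi> / 2) powr (- \<mu>)" using \<xi> \<theta> \<mu> by (intro powr_mono2') auto
  also have "(\<xi> / 2) powr (- \<mu>) = 2 powr \<mu> * \<xi> powr (- \<mu>)"
    by (simp add: powr_divide powr_minus_divide)
  finally have half: "(\<theta> / 2) powr (- \<mu>) \<le> 2 powr \<mu> * \<xi> powr (- \<mu>)" .
  have whole: "\<theta> powr (- \<mu>) \<le> \<xi> powr (- \<mu>)" using \<xi> \<theta> \<mu> by (intro powr_mono2') auto
  have b1: "0 < U \<theta>" "U \<theta> \<le> A * \<theta> powr (- \<mu>)" using bound[of \<theta>] by auto
  have b2: "0 < U (\<theta> / 2)" "U (\<theta> / 2) \<le> A * (\<theta> / 2) powr (- \<mu>)" using bound[of "\<theta> / 2"] by auto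
  have "\<bar>U \<theta> - U (\<theta> / 2)\<bar> \<le> A * \<theta> powr (- \<mu>) + A * (\<theta> / 2) powr (- \<mu>)"
    unfolding abs_le_iff using b1 b2 by linarith
  also have "\<dots> \<le> A * \<xi> powr (- \<mu>) + A * (2 powr \<mu> * \<xi> powr (- \<mu>))"
    using A half whole by (intro add_mono mult_left_mono)
  also have "\<dots> = A * (1 + 2 powr \<mu>) * \<xi> powr (- \<mu>)" by (simp add: algebra_simps)
  finally have "\<bar>U \<theta> - U (\<theta> / 2)\<bar> \<le> A * (1 + 2 powr \<mu>) * \<xi> powr (- \<mu>)" .
  then have "\<bar>U' \<xi>\<bar> * (\<theta> / 2) \<le> A * (1 + 2 powr \<mu>) * \<xi> powr (- \<mu>)"
    using \<xi>(4) \<theta> unfolding d by (simp add: abs_mult algebra_simps)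
  moreover have "\<bar>U' \<xi>\<bar> * (\<xi> / 2) \<le> \<bar>U' \<xi>\<bar> * (\<theta> / 2)" using \<xi> by (intro mult_left_mono) auto
  ultimately have "\<bar>U' \<xi>\<bar> * \<xi> \<le> 2 * A * (1 + 2 powr \<mu>) * \<xi> powr (- \<mu>)" by linarith
  then show ?thesis using that \<xi> \<theta> by (simp add: field_simps)
qed

lemma tendsto_pi_at_top:
  fixes F :: "real \<Rightarrow> real"
  assumes lower: "\<And>\<delta>. 0 < \<delta> \<Longrightarrow> \<delta> \<le> pi / 2 \<Longrightarrow> eventually (\<lambda>p. pi - \<delta> \<le> F p) at_top"
    and upper: "eventually (\<lambda>p. F p < pi) at_top"
  shows "(F \<longlongrightarrow> pi) at_top"
proof (rule order_tendstoI)
  fix a assume "a < pi"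
  define \<delta> where "\<delta> = min ((pi - a) / 2) (pi / 2)"
  have "\<delta> \<le> (pi - a) / 2" unfolding \<delta>_def by (rule min.cobounded1)
  then have "0 < \<delta>" "\<delta> \<le> pi / 2" "a < pi - \<delta>"
    using \<open>a < pi\<close> pi_gt_zero unfolding \<delta>_def by auto
  then show "eventually (\<lambda>p. a < F p) at_top"
    using lower[of \<delta>] by (auto elim: eventually_mono)
next
  fix a assume "a > pi"
  then show "eventually (\<lambda>p. F p < a) at_top" using upper by (auto elim: eventually_mono)
qed

lemma neg_two_cos_le_mult_sin:
  fixes l y \<Theta> :: real
  assumes l: "l \<ge> 0" and y: "0 < y" "y \<le> 1" "4 \<le> (l ^ 2 + 4) * y ^ 2"
    and \<Theta>: "0 < \<Theta>" "\<Theta> \<le> pi - arcsin y"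
  shows "- 2 * cos \<Theta> \<le> l * sin \<Theta>"
proof (cases "cos \<Theta> \<ge> 0")
  case True
  have "0 < arcsin y" using arcsin_less_mono[of 0 y] y by simp
  then have "sin \<Theta> \<ge> 0" using \<Theta> by (intro sin_ge_zero) auto
  then show ?thesis using True l by (smt (verit) mult_nonneg_nonneg)
next
  case False
  have "\<Theta> > pi / 2" using False cos_ge_zero[of \<Theta>] \<Theta> by (cases "\<Theta> \<le> pi / 2") auto
  have "sin (arcsin y) \<le> sin (pi - \<Theta>)"
    by (rule sin_monotone_2pi_le) (use y \<Theta> \<open>\<Theta> > pi / 2\<close> arcsin_bounded[of y] in auto)
  then have "y \<le> sin \<Theta>" using y by simp
  then have "(l ^ 2 + 4) * y ^ 2 \<le> (l ^ 2 + 4) * sin \<Theta> ^ 2"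
    using y by (intro mult_left_mono power_mono) auto
  then have "(2 * cos \<Theta>) ^ 2 \<le> (l * sin \<Theta>) ^ 2"
    using y(3) by (simp add: power_mult_distrib cos_squared_eq algebra_simps)
  then have "\<bar>2 * cos \<Theta>\<bar> \<le> \<bar>l * sin \<Theta>\<bar>" using abs_le_square_iff by blast
  then show ?thesis using \<open>y \<le> sin \<Theta>\<close> y l by (simp add: abs_mult)
qed

lemma exists_mult_cos_neq_mult_sin:
  fixes \<alpha> \<beta> \<Theta> :: real
  assumes "\<alpha> \<ge> 0" "\<beta> > 0" "0 < \<Theta>" "\<Theta> < pi"
  shows "\<exists>t. 0 < t \<and> t < \<Theta> \<and> \<alpha> * cos t \<noteq> \<beta> * sin t"
proof (rule ccontr)
  assume "\<not> ?thesis"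
  then have balanced: "\<alpha> * cos t = \<beta> * sin t" if "0 < t" "t < \<Theta>" for t
    using that by auto
  have "sin (\<Theta> / 4) < sin (\<Theta> / 2)" by (rule sin_monotone_2pi) (use assms in auto)
  moreover have "cos (\<Theta> / 2) < cos (\<Theta> / 4)" by (rule cos_monotone_0_pi) (use assms in auto)
  moreover have "\<alpha> * (cos (\<Theta> / 4) - cos (\<Theta> / 2)) = \<beta> * (sin (\<Theta> / 4) - sin (\<Theta> / 2))"
    using balanced[of "\<Theta> / 4"] balanced[of "\<Theta> / 2"] assms by (simp add: algebra_simps)
  ultimately show False
    using assms mult_nonneg_nonneg[of \<alpha> "cos (\<Theta> / 4) - cos (\<Theta> / 2)"]
      mult_pos_neg[of \<beta> "sin (\<Theta> / 4) - sin (\<Theta> / 2)"] by linarith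
qed

section \<open>The Pohozaev functional\<close>

definition pohozaev_weight :: "nat \<Rightarrow> real \<Rightarrow> real \<Rightarrow> real" where
  "pohozaev_weight n l t = 2 * sin t * cos t + l * sin t ^ n"

definition pohozaev_coeff :: "nat \<Rightarrow> real \<Rightarrow> real \<Rightarrow> real" where
  "pohozaev_coeff n l t = 2 * (real n + 1) * cos t ^ 2 - 2 * sin t ^ 2 + 2 * l * real n * sin t ^ (n - 1) * cos t"

definition pohozaev :: "nat \<Rightarrow> real \<Rightarrow> real \<Rightarrow> (real \<Rightarrow> real) \<Rightarrow> (real \<Rightarrow> real) \<Rightarrow> real \<Rightarrow> real" where
  "pohozaev n l p U U' t =
     pohozaev_weight n l t * sin t ^ n * (U' t) ^ 2 / 2 + sin t ^ n * U t * U' t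
     + pohozaev_weight n l t * sin t ^ n * U t powr (p + 1) / (p + 1)"

definition pohozaev_rate :: "nat \<Rightarrow> real \<Rightarrow> real \<Rightarrow> real \<Rightarrow> real \<Rightarrow> real \<Rightarrow> real" where
  "pohozaev_rate n l p u u' t =
     sin t ^ n * ((2 - real n) * cos t ^ 2 * u' ^ 2 + u powr (p + 1) * (pohozaev_coeff n l t - (p + 1)) / (p + 1))"

text \<open>The algebra behind the derivative of the functional: \<open>s, c, S, q\<close> stand for
  \<open>sin t, cos t, sin t ^ (n - 1), cot t\<close>, \<open>x\<close> for \<open>n\<close>, \<open>up\<close> for \<open>U t powr p\<close>, and \<open>U2\<close> is
  \<open>U''\<close> eliminated through the equation.\<close>

lemma pohozaev_derivative_identity:
  fixes s c S u u1 up l p x q U2 :: real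
  assumes p: "p + 1 \<noteq> 0" and sc: "s ^ 2 + c ^ 2 = 1" and q: "c = q * s"
    and U2: "U2 = - (x * q * u1 + up)"
  shows "((2 * (c ^ 2 - s ^ 2) + l * (x * c * S)) * (s * S) + (2 * s * c + l * (s * S)) * (x * c * S)) * u1 ^ 2 / 2
      + (2 * s * c + l * (s * S)) * (s * S) * (2 * u1 * U2) / 2
      + (x * c * S * u * u1 + (s * S) * u1 * u1 + (s * S) * u * U2)
      + (((2 * (c ^ 2 - s ^ 2) + l * (x * c * S)) * (s * S) + (2 * s * c + l * (s * S)) * (x * c * S)) * (up * u)
        + (2 * s * c + l * (s * S)) * (s * S) * ((p + 1) * up * u1)) / (p + 1)
   = (s * S) * ((2 - x) * c ^ 2 * u1 ^ 2 + (up * u) * (2 * (x + 1) * c ^ 2 - 2 * s ^ 2 + 2 * l * x * S * c - (p + 1)) / (p + 1))"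
  unfolding U2 using p
  apply (simp add: field_simps)
  using sc q by algebra

lemma has_real_derivative_pohozaev:
  assumes n: "n \<ge> 1" and p: "p > 0" and s: "sin t \<noteq> 0" and Up: "U t > 0"
    and dU: "(U has_real_derivative U' t) (at t)" and dU': "(U' has_real_derivative U'') (at t)"
    and ode: "U'' + real n * (cos t / sin t) * U' t + U t powr p = 0"
  shows "(pohozaev n l p U U' has_real_derivative pohozaev_rate n l p (U t) (U' t) t) (at t)"
proof -
  obtain m where m: "n = Suc m" using n by (cases n) auto
  define S where "S = sin t ^ m"
  have sn: "sin t ^ n = sin t * S" unfolding S_def m by simp
  have sn1: "sin t ^ (n - Suc 0) = S" unfolding S_def m by simp
  have pw: "U t powr (p + 1) = U t powr p * U t" using Up by (simp add: powr_add)
  have U'': "U'' = - (real n * (cos t / sin t) * U' t + U t powr p)" using ode by linarith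
  have dw: "((\<lambda>t. sin t ^ n) has_real_derivative real n * cos t * S) (at t)"
    by (rule derivative_eq_intros refl)+ (simp add: sn1)
  have dg: "(pohozaev_weight n l has_real_derivative
      2 * (cos t ^ 2 - sin t ^ 2) + l * (real n * cos t * S)) (at t)"
    unfolding pohozaev_weight_def[abs_def]
    by (rule derivative_eq_intros dw refl)+ (simp add: power2_eq_square algebra_simps)
  have dq: "((\<lambda>t. (U' t) ^ 2) has_real_derivative 2 * U' t * U'') (at t)"
    by (rule derivative_eq_intros dU' refl)+ simp
  have dp: "((\<lambda>t. U t powr (p + 1)) has_real_derivative (p + 1) * U t powr p * U' t) (at t)"
    by (rule derivative_eq_intros dU refl | simp add: Up)+
  note dGW = DERIV_mult[OF dg dw]
  have d0: "(pohozaev n l p U U' has_real_derivative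
      ((2 * (cos t ^ 2 - sin t ^ 2) + l * (real n * cos t * S)) * sin t ^ n
        + pohozaev_weight n l t * (real n * cos t * S)) * (U' t) ^ 2 / 2
      + pohozaev_weight n l t * sin t ^ n * (2 * U' t * U'') / 2
      + (real n * cos t * S * U t * U' t + sin t ^ n * U' t * U' t + sin t ^ n * U t * U'')
      + (((2 * (cos t ^ 2 - sin t ^ 2) + l * (real n * cos t * S)) * sin t ^ n
        + pohozaev_weight n l t * (real n * cos t * S)) * U t powr (p + 1)
        + pohozaev_weight n l t * sin t ^ n * ((p + 1) * U t powr p * U' t)) / (p + 1)) (at t)"
    unfolding pohozaev_def[abs_def]
    by (rule DERIV_cong[OF DERIV_add[OF DERIV_add[OF DERIV_cdivide[OF DERIV_mult[OF dGW dq]]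
          DERIV_mult[OF DERIV_mult[OF dw dU] dU']] DERIV_cdivide[OF DERIV_mult[OF dGW dp]]]])
      (use p in \<open>simp add: field_simps\<close>)
  have rate: "pohozaev_rate n l p (U t) (U' t) t = (sin t * S) * ((2 - real n) * cos t ^ 2 * U' t ^ 2
      + (U t powr p * U t) * (2 * (real n + 1) * cos t ^ 2 - 2 * sin t ^ 2 + 2 * l * real n * S * cos t - (p + 1)) / (p + 1))"
    unfolding pohozaev_rate_def pohozaev_coeff_def sn pw using sn1 by (simp add: algebra_simps)
  show ?thesis
    apply (rule DERIV_cong[OF d0])
    unfolding rate pohozaev_weight_def sn pw
    by (rule pohozaev_derivative_identity[where q = "cos t / sin t"]) (use p s U'' in auto)
qed

lemma continuous_on_pohozaev:
  assumes "continuous_on S U" "continuous_on S U'" "\<And>t. t \<in> S \<Longrightarrow> U t \<ge> 0" "p > 0"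
  shows "continuous_on S (pohozaev n l p U U')"
proof -
  have "continuous_on S (\<lambda>t. U t powr (p + 1))"
    by (rule continuous_on_powr'[OF assms(1) continuous_on_const]) (use assms(3,4) in auto)
  then show ?thesis
    unfolding pohozaev_def pohozaev_weight_def
    by (intro continuous_on_add continuous_on_mult continuous_on_divide continuous_on_power
        continuous_on_sin continuous_on_cos continuous_on_id continuous_on_const assms(1,2))
      (use assms(4) in auto)
qed

lemma pohozaev_rate_nonpos:
  assumes "n \<ge> 2" "sin t \<ge> 0" "p > -1" "pohozaev_coeff n l t \<le> p + 1"
  shows "pohozaev_rate n l p u u' t \<le> 0"
proof -
  have "(2 - real n) * cos t ^ 2 * u' ^ 2 \<le> 0"
    using assms(1) by (auto intro!: mult_nonpos_nonneg)
  moreover have "u powr (p + 1) * (pohozaev_coeff n l t - (p + 1)) / (p + 1) \<le> 0"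
    using assms(3,4) by (intro divide_nonpos_pos mult_nonneg_nonpos) auto
  ultimately show ?thesis
    unfolding pohozaev_rate_def using assms(2) by (intro mult_nonneg_nonpos) auto
qed

lemma pohozaev_rate_neg:
  assumes "n \<ge> 2" "sin t > 0" "p > -1" "u > 0" "pohozaev_coeff n l t < p + 1"
  shows "pohozaev_rate n l p u u' t < 0"
proof -
  have "(2 - real n) * cos t ^ 2 * u' ^ 2 \<le> 0"
    using assms(1) by (auto intro!: mult_nonpos_nonneg)
  moreover have "u powr (p + 1) * (pohozaev_coeff n l t - (p + 1)) / (p + 1) < 0"
    using assms(3-5) by (intro divide_neg_pos mult_pos_neg) auto
  ultimately show ?thesis
    unfolding pohozaev_rate_def using assms(2) by (intro mult_pos_neg) auto
qed

lemma pohozaev_at_zero: "n \<ge> 1 \<Longrightarrow> pohozaev n l p U U' 0 = 0"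
  by (simp add: pohozaev_def pohozaev_weight_def power_0_left)

lemma pohozaev_nonneg_at_root:
  assumes "U t = 0" "sin t \<ge> 0" "pohozaev_weight n l t \<ge> 0" "p > -1"
  shows "pohozaev n l p U U' t \<ge> 0"
  using assms by (simp add: pohozaev_def)

lemma pohozaev_weight_nonneg:
  assumes "n \<ge> 1" "sin t \<ge> 0" "- 2 * cos t \<le> l * sin t ^ (n - 1)"
  shows "pohozaev_weight n l t \<ge> 0"
proof -
  have "pohozaev_weight n l t = sin t * (2 * cos t + l * sin t ^ (n - 1))"
    using assms(1) by (cases n) (auto simp: pohozaev_weight_def algebra_simps)
  then show ?thesis using assms(2,3) by simp
qed

lemma abs_pohozaev_weight_le:
  assumes n: "n \<ge> 1" and l: "l \<ge> 0" and r: "0 \<le> r" "r \<le> pi"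
  shows "\<bar>pohozaev_weight n l r\<bar> \<le> (2 + l) * r"
proof -
  have s: "0 \<le> sin r" "sin r \<le> r" "sin r \<le> 1" using r by (auto intro: sin_ge_zero sin_x_le_x)
  have "sin r ^ n \<le> sin r ^ 1" using n s by (intro power_decreasing) auto
  have "\<bar>pohozaev_weight n l r\<bar> \<le> 2 * sin r * \<bar>cos r\<bar> + l * sin r ^ n"
    unfolding pohozaev_weight_def
    using abs_triangle_ineq[of "2 * sin r * cos r" "l * sin r ^ n"] s l by (simp add: abs_mult)
  also have "\<dots> \<le> 2 * r + l * r"
  proof (rule add_mono)
    show "2 * sin r * \<bar>cos r\<bar> \<le> 2 * r"
      using s mult_left_le[OF abs_cos_le_one[of r], of "2 * sin r"] by linarith
    show "l * sin r ^ n \<le> l * r"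
      using s l \<open>sin r ^ n \<le> sin r ^ 1\<close> by (intro mult_left_mono) auto
  qed
  finally show ?thesis by (simp add: algebra_simps)
qed

lemma pohozaev_coeff_le:
  assumes "l \<ge> 0"
  shows "pohozaev_coeff n l t \<le> 2 * (real n + 1) + 2 * l * real n"
proof -
  have "\<bar>sin t ^ (n - 1) * cos t\<bar> \<le> 1"
    by (simp add: abs_mult power_abs)
      (intro mult_le_one power_le_one abs_sin_le_one abs_cos_le_one; simp)
  then have "2 * l * real n * sin t ^ (n - 1) * cos t \<le> 2 * l * real n"
    using assms mult_left_mono[of "sin t ^ (n - 1) * cos t" 1 "2 * l * real n"] by (simp add: mult.assoc)
  moreover have "2 * (real n + 1) * cos t ^ 2 \<le> 2 * (real n + 1)"
    by (simp add: abs_square_le_1)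
  moreover have "0 \<le> sin t ^ 2" by simp
  ultimately show ?thesis unfolding pohozaev_coeff_def by linarith
qed

lemma pohozaev_weight_nonneg_away_from_pi:
  fixes \<delta> \<Theta> :: real
  assumes n: "n \<ge> 1" and \<delta>: "0 < \<delta>" "\<delta> \<le> pi / 2" and \<Theta>: "0 < \<Theta>" "\<Theta> \<le> pi - \<delta>"
  shows "pohozaev_weight n (2 / sin \<delta> ^ (n - 1)) \<Theta> \<ge> 0"
proof (rule pohozaev_weight_nonneg[OF n])
  define l where "l = 2 / sin \<delta> ^ (n - 1)"
  have sin_\<delta>: "sin \<delta> > 0" using \<delta> by (intro sin_gt_zero) auto
  have sin_\<Theta>: "sin \<Theta> \<ge> 0" using \<Theta> \<delta> by (intro sin_ge_zero) auto
  then show "sin \<Theta> \<ge> 0" .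
  show "- 2 * cos \<Theta> \<le> l * sin \<Theta> ^ (n - 1)"
  proof (cases "cos \<Theta> \<ge> 0")
    case True
    have "l \<ge> 0" using sin_\<delta> by (simp add: l_def)
    then show ?thesis using True sin_\<Theta> by (smt (verit) mult_nonneg_nonneg zero_le_power)
  next
    case False
    have "\<Theta> > pi / 2" using False cos_ge_zero[of \<Theta>] \<Theta> by (cases "\<Theta> \<le> pi / 2") auto
    have "sin \<delta> \<le> sin (pi - \<Theta>)"
      by (rule sin_monotone_2pi_le) (use \<delta> \<Theta> \<open>\<Theta> > pi / 2\<close> in auto)
    then have "sin \<delta> ^ (n - 1) \<le> sin \<Theta> ^ (n - 1)" using sin_\<delta> by (intro power_mono) auto
    then have "2 \<le> l * sin \<Theta> ^ (n - 1)"
      using sin_\<delta> by (simp add: l_def field_simps)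
    then show ?thesis by (smt (verit) cos_ge_minus_one)
  qed
qed

lemma pohozaev_coeff_2_eq_square:
  fixes p t :: real
  assumes "p \<ge> 5"
  shows "p + 1 - pohozaev_coeff 2 (sqrt (p - 5) * sqrt (p + 3) / 2) t
       = (sqrt (p - 5) * cos t - sqrt (p + 3) * sin t) ^ 2"
proof -
  have "sqrt (p - 5) ^ 2 = p - 5" "sqrt (p + 3) ^ 2 = p + 3" using assms by auto
  moreover have "sin t ^ 2 + cos t ^ 2 = 1" by simp
  ultimately show ?thesis
    unfolding pohozaev_coeff_def
    by (simp add: power2_diff power_mult_distrib) (use \<open>sin t ^ 2 + cos t ^ 2 = 1\<close> in algebra)
qed

section \<open>Nonexistence of regular solutions\<close>

lemma regular_solution_pohozaev:
  fixes N :: nat and p l \<Theta> :: real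
  assumes N: "N \<ge> 3" and p: "p > 0" and \<Theta>: "0 < \<Theta>" "\<Theta> < pi"
    and U: "regular_solution (real N) p \<Theta> U"
  obtains U' where "continuous_on {0..\<Theta>} (pohozaev (N - 1) l p U U')"
    and "\<And>t. 0 < t \<Longrightarrow> t < \<Theta> \<Longrightarrow>
      (pohozaev (N - 1) l p U U' has_real_derivative pohozaev_rate (N - 1) l p (U t) (U' t) t) (at t)"
    and "U \<Theta> = 0" and "\<And>t. 0 \<le> t \<Longrightarrow> t < \<Theta> \<Longrightarrow> U t > 0"
proof -
  obtain U' U'' where
    d: "\<forall>\<theta>\<in>{0..\<Theta>}. (U has_real_derivative U' \<theta>) (at \<theta> within {0..\<Theta>}) \<and>
                        (U' has_real_derivative U'' \<theta>) (at \<theta> within {0..\<Theta>})"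
    and ode: "\<forall>\<theta>\<in>{0<..<\<Theta>}. U'' \<theta> + (real N - 1) * (cos \<theta> / sin \<theta>) * U' \<theta> + U \<theta> powr p = 0"
    and U\<Theta>: "U \<Theta> = 0" and U_pos: "\<forall>\<theta>\<in>{0..<\<Theta>}. U \<theta> > 0"
    using U unfolding regular_solution_def by blast
  have contU: "continuous_on {0..\<Theta>} U" and contU': "continuous_on {0..\<Theta>} U'"
    using d unfolding continuous_on_eq_continuous_within by (auto intro: DERIV_continuous)
  have "continuous_on {0..\<Theta>} (pohozaev (N - 1) l p U U')"
    by (rule continuous_on_pohozaev[OF contU contU'])
      (use U_pos U\<Theta> p in \<open>auto simp: less_eq_real_def\<close>)
  moreover have "(pohozaev (N - 1) l p U U' has_real_derivative pohozaev_rate (N - 1) l p (U t) (U' t) t) (at t)"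
    if t: "0 < t" "t < \<Theta>" for t
  proof (rule has_real_derivative_pohozaev)
    show "(U has_real_derivative U' t) (at t)" "(U' has_real_derivative U'' t) (at t)"
      using d[rule_format, of t] t at_within_Icc_at[of 0 t \<Theta>] by auto
    show "U'' t + real (N - 1) * (cos t / sin t) * U' t + U t powr p = 0"
      using ode t N by (auto simp: of_nat_diff)
    show "sin t \<noteq> 0" using t \<Theta> sin_gt_zero[of t] by auto
  qed (use N p U_pos t in auto)
  ultimately show ?thesis using that U\<Theta> U_pos by auto
qed

lemma no_regular_solution_by_pohozaev:
  fixes N :: nat and p l \<Theta> :: real
  assumes N: "N \<ge> 3" and p: "p > 0" and \<Theta>: "0 < \<Theta>" "\<Theta> < pi"
    and weight: "pohozaev_weight (N - 1) l \<Theta> \<ge> 0"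
    and coeff: "\<And>t. 0 < t \<Longrightarrow> t < \<Theta> \<Longrightarrow> pohozaev_coeff (N - 1) l t \<le> p + 1"
    and coeff_strict: "\<exists>t. 0 < t \<and> t < \<Theta> \<and> pohozaev_coeff (N - 1) l t < p + 1"
  shows "\<not> regular_solution (real N) p \<Theta> U"
proof
  assume "regular_solution (real N) p \<Theta> U"
  then obtain U' where cont: "continuous_on {0..\<Theta>} (pohozaev (N - 1) l p U U')"
    and der: "\<And>t. 0 < t \<Longrightarrow> t < \<Theta> \<Longrightarrow>
      (pohozaev (N - 1) l p U U' has_real_derivative pohozaev_rate (N - 1) l p (U t) (U' t) t) (at t)"
    and U\<Theta>: "U \<Theta> = 0" and U_pos: "\<And>t. 0 \<le> t \<Longrightarrow> t < \<Theta> \<Longrightarrow> U t > 0"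
    using regular_solution_pohozaev[OF N p \<Theta>, where l = l] by blast
  have sin_pos: "sin t > 0" if "0 < t" "t < \<Theta>" for t
    using that \<Theta> by (intro sin_gt_zero) auto
  obtain t0 where t0: "0 < t0" "t0 < \<Theta>" "pohozaev_coeff (N - 1) l t0 < p + 1"
    using coeff_strict by auto
  have "pohozaev (N - 1) l p U U' \<Theta> < pohozaev (N - 1) l p U U' 0"
  proof (rule DERIV_nonpos_imp_strict_decreasing_open[OF cont der _ t0(1,2)])
    show "pohozaev_rate (N - 1) l p (U t) (U' t) t \<le> 0" if "0 < t" "t < \<Theta>" for t
      using N p sin_pos[OF that] coeff[OF that] by (intro pohozaev_rate_nonpos) auto
    show "pohozaev_rate (N - 1) l p (U t0) (U' t0) t0 < 0"
      using N p sin_pos[OF t0(1,2)] U_pos t0 by (intro pohozaev_rate_neg) auto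
  qed
  moreover have "pohozaev (N - 1) l p U U' 0 = 0" using N by (intro pohozaev_at_zero) auto
  moreover have "pohozaev (N - 1) l p U U' \<Theta> \<ge> 0"
    using U\<Theta> \<Theta> weight p by (intro pohozaev_nonneg_at_root sin_ge_zero) auto
  ultimately show False by simp
qed

lemma no_regular_solution_away_from_pi:
  fixes N :: nat and \<delta> p \<Theta> :: real
  assumes N: "N \<ge> 3" and \<delta>: "0 < \<delta>" "\<delta> \<le> pi / 2"
    and p: "p > 0" "2 * real N + 4 * (real N - 1) / sin \<delta> ^ (N - 2) < p + 1"
    and \<Theta>: "0 < \<Theta>" "\<Theta> \<le> pi - \<delta>"
  shows "\<not> regular_solution (real N) p \<Theta> U"
proof (rule no_regular_solution_by_pohozaev[OF N p(1) \<Theta>(1)])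
  define l where "l = 2 / sin \<delta> ^ (N - 2)"
  have "sin \<delta> > 0" using \<delta> by (intro sin_gt_zero) auto
  then have l: "l \<ge> 0" by (simp add: l_def)
  have "N - 1 - 1 = N - 2" by simp
  then show "pohozaev_weight (N - 1) l \<Theta> \<ge> 0"
    unfolding l_def using pohozaev_weight_nonneg_away_from_pi[of "N - 1" \<delta> \<Theta>] N \<delta> \<Theta> by simp
  have "pohozaev_coeff (N - 1) l t < p + 1" for t
    using pohozaev_coeff_le[OF l, of "N - 1" t] p(2) N by (simp add: l_def of_nat_diff algebra_simps)
  then show "\<And>t. pohozaev_coeff (N - 1) l t \<le> p + 1"
    and "\<exists>t. 0 < t \<and> t < \<Theta> \<and> pohozaev_coeff (N - 1) l t < p + 1"
    using \<Theta> by (auto intro!: exI[of _ "\<Theta> / 2"] less_imp_le)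
  show "\<Theta> < pi" using \<Theta> \<delta> by linarith
qed

lemma no_regular_solution_3:
  fixes p \<Theta> :: real
  assumes p: "p \<ge> 5" and \<Theta>: "0 < \<Theta>" "\<Theta> \<le> pi - arcsin (4 / (p - 1))"
  shows "\<not> regular_solution 3 p \<Theta> U"
proof -
  define y where "y = 4 / (p - 1)"
  define l where "l = sqrt (p - 5) * sqrt (p + 3) / 2"
  have y: "0 < y" "y \<le> 1" using p by (auto simp: y_def field_simps)
  have "0 < arcsin y" using arcsin_less_mono[of 0 y] y by simp
  then have \<Theta>_lt_pi: "\<Theta> < pi" using \<Theta> unfolding y_def by linarith
  have l: "l \<ge> 0" "l ^ 2 = (p - 5) * (p + 3) / 4"
    using p by (auto simp: l_def power_mult_distrib power_divide)
  have l4: "l ^ 2 + 4 = (p - 1) ^ 2 / 4"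
    unfolding l(2) by (simp add: field_simps power2_eq_square)
  have "(l ^ 2 + 4) * y ^ 2 = (p - 1) ^ 2 / 4 * (4 / (p - 1)) ^ 2"
    by (simp only: l4 y_def)
  also have "\<dots> = 4" using p by (simp add: power_divide)
  finally have "4 \<le> (l ^ 2 + 4) * y ^ 2" by simp
  then have "- 2 * cos \<Theta> \<le> l * sin \<Theta>"
    by (rule neg_two_cos_le_mult_sin[OF l(1) y]) (use \<Theta> in \<open>simp_all add: y_def\<close>)
  then have weight: "pohozaev_weight 2 l \<Theta> \<ge> 0"
    using \<Theta> \<Theta>_lt_pi by (intro pohozaev_weight_nonneg sin_ge_zero) auto
  have square: "p + 1 - pohozaev_coeff 2 l t = (sqrt (p - 5) * cos t - sqrt (p + 3) * sin t) ^ 2" for t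
    unfolding l_def using p by (rule pohozaev_coeff_2_eq_square)
  obtain t where t: "0 < t" "t < \<Theta>" "sqrt (p - 5) * cos t \<noteq> sqrt (p + 3) * sin t"
    using exists_mult_cos_neq_mult_sin[of "sqrt (p - 5)" "sqrt (p + 3)" \<Theta>] p \<Theta> \<Theta>_lt_pi by auto
  then have "0 < (sqrt (p - 5) * cos t - sqrt (p + 3) * sin t) ^ 2" by simp
  then have "\<exists>t. 0 < t \<and> t < \<Theta> \<and> pohozaev_coeff 2 l t < p + 1"
    using square[of t] t by (intro exI[of _ t]) linarith
  moreover have "pohozaev_coeff 2 l t \<le> p + 1" for t
    using square[of t] by (smt (verit) zero_le_power2)
  ultimately show ?thesis
    using no_regular_solution_by_pohozaev[of 3 p \<Theta> l U] p \<Theta> \<Theta>_lt_pi weight by simp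
qed

section \<open>The first zero of the singular solution\<close>

lemma above_pS:
  fixes N :: nat and p :: real
  assumes N: "N \<ge> 3" and p: "p > pS (real N)"
  shows "p > 1" "2 * (2 / (p - 1)) < real N - 2"
proof -
  have N2: "real N - 2 > 0" using N by simp
  then have "(real N + 2) / (real N - 2) > 1" by simp
  then show p1: "p > 1" using p unfolding pS_def by linarith
  have "p * (real N - 2) > real N + 2" using p N2 unfolding pS_def by (simp add: field_simps)
  then have "4 < (p - 1) * (real N - 2)" by (simp add: algebra_simps)
  then show "2 * (2 / (p - 1)) < real N - 2" using p1 by (simp add: field_simps)
qed

lemma singular_profile_le:
  fixes N \<mu> a \<theta> :: real
  assumes N: "N \<ge> 2" and \<mu>: "\<mu> > 0" and a: "a \<ge> 0" and \<theta>: "0 < \<theta>" "\<theta> \<le> 1"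
  shows "a * cos (\<theta> / 2) powr (- (N - 2)) * (2 * tan (\<theta> / 2)) powr (- \<mu>)
       \<le> a * 2 powr (N - 2) * \<theta> powr (- \<mu>)"
proof -
  have "cos (pi / 3) \<le> cos (\<theta> / 2)"
    by (rule cos_monotone_0_pi_le) (use \<theta> pi_ge_two in auto)
  then have "1 / 2 \<le> cos (\<theta> / 2)" by (simp add: cos_60)
  have "cos (\<theta> / 2) powr (- (N - 2)) \<le> (1 / 2) powr (- (N - 2))"
    by (rule powr_mono2') (use N \<open>1 / 2 \<le> cos (\<theta> / 2)\<close> in auto)
  also have "(1 / 2 :: real) powr (- (N - 2)) = 2 powr (N - 2)"
    by (simp add: powr_divide powr_minus_divide) (simp add: powr_minus_divide[symmetric])
  finally have cos_part: "cos (\<theta> / 2) powr (- (N - 2)) \<le> 2 powr (N - 2)" .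
  have "\<bar>\<theta> / 2\<bar> \<le> \<bar>tan (\<theta> / 2)\<bar>" by (rule abs_tan_ge) (use \<theta> pi_ge_two in auto)
  moreover have "tan (\<theta> / 2) > 0" by (rule tan_gt_zero) (use \<theta> pi_ge_two in auto)
  ultimately have "(2 * tan (\<theta> / 2)) powr (- \<mu>) \<le> \<theta> powr (- \<mu>)"
    by (intro powr_mono2') (use \<mu> \<theta> in auto)
  with cos_part show ?thesis
    using a by (intro mult_mono mult_left_mono) auto
qed

lemma singular_solution_bound_near_zero:
  fixes N :: nat and p :: real and U :: "real \<Rightarrow> real"
  assumes N: "N \<ge> 3" and p: "p > pS (real N)" and U: "singular_solution (real N) p U"
  obtains b A where "b > 0" "\<And>\<theta>. 0 < \<theta> \<Longrightarrow> \<theta> < b \<Longrightarrow> 0 < U \<theta> \<and> U \<theta> \<le> A * \<theta> powr (- (2 / (p - 1)))"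
proof -
  define \<mu> where "\<mu> = 2 / (p - 1)"
  define a where "a = (\<mu> * (real N - 2 - \<mu>)) powr (\<mu> / 2)"
  define f where "f \<theta> = a * cos (\<theta> / 2) powr (- (real N - 2)) * (2 * tan (\<theta> / 2)) powr (- \<mu>)" for \<theta>
  have \<mu>: "\<mu> > 0" "2 * \<mu> < real N - 2" using above_pS[OF N p] unfolding \<mu>_def by auto
  have asymp: "U \<sim>[at_right 0] f"
    using U unfolding singular_solution_def Let_def \<mu>_def[symmetric] a_def[symmetric] f_def[abs_def]
    by blast
  have a: "a > 0" unfolding a_def using \<mu> by simp
  have f_pos: "f \<theta> > 0" if "0 < \<theta>" "\<theta> < pi" for \<theta>
  proof -
    have "cos (\<theta> / 2) > 0" using that by (intro cos_gt_zero_pi) auto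
    moreover have "tan (\<theta> / 2) > 0" using that by (intro tan_gt_zero) auto
    ultimately show ?thesis unfolding f_def using a by simp
  qed
  have "eventually (\<lambda>\<theta>. U \<theta> \<noteq> 0 \<or> f \<theta> \<noteq> 0) (at_right 0)"
    unfolding eventually_at_right_field
    by (intro exI[of _ pi]) (use f_pos pi_gt_zero in fastforce)
  then have "((\<lambda>\<theta>. U \<theta> / f \<theta>) \<longlongrightarrow> 1) (at_right 0)"
    by (rule asymp_equivD_strong[OF asymp])
  then have "eventually (\<lambda>\<theta>. 1 / 2 < U \<theta> / f \<theta> \<and> U \<theta> / f \<theta> < 3 / 2 \<and> \<theta> < 1) (at_right 0)"
    by (intro eventually_conj order_tendstoD)
      (auto simp: eventually_at_right_field intro!: exI[of _ 1])
  then obtain b where b: "b > 0"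
    and ratio: "\<And>\<theta>. 0 < \<theta> \<Longrightarrow> \<theta> < b \<Longrightarrow> 1 / 2 < U \<theta> / f \<theta> \<and> U \<theta> / f \<theta> < 3 / 2 \<and> \<theta> < 1"
    unfolding eventually_at_right_field by auto
  show ?thesis
  proof (rule that[OF b])
    fix \<theta> assume \<theta>: "0 < \<theta>" "\<theta> < b"
    have r: "1 / 2 < U \<theta> / f \<theta>" "U \<theta> / f \<theta> < 3 / 2" "\<theta> < 1" using ratio[OF \<theta>] by auto
    have "f \<theta> > 0" using f_pos[of \<theta>] r \<theta> pi_ge_two by auto
    then have "0 < U \<theta>" "U \<theta> \<le> 3 / 2 * f \<theta>" using r by (simp_all add: field_simps)
    moreover have "f \<theta> \<le> a * 2 powr (real N - 2) * \<theta> powr (- \<mu>)"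
      unfolding f_def by (rule singular_profile_le) (use N \<mu> a r \<theta> in auto)
    ultimately show "0 < U \<theta> \<and> U \<theta> \<le> 3 / 2 * (a * 2 powr (real N - 2)) * \<theta> powr (- (2 / (p - 1)))"
      unfolding \<mu>_def by simp
  qed
qed

lemma positive_before_first_zero:
  fixes U :: "real \<Rightarrow> real"
  assumes T: "first_zero U T" and cont: "continuous_on {0<..<pi} U"
    and b: "b > 0" "\<And>\<theta>. 0 < \<theta> \<Longrightarrow> \<theta> < b \<Longrightarrow> U \<theta> > 0"
    and x: "0 < x" "x < T"
  shows "U x > 0"
proof (rule ccontr)
  assume "\<not> U x > 0"
  define y where "y = min x b / 2"
  have y: "0 < y" "y < b" "y \<le> x" using x b unfolding y_def by auto
  have "T < pi" using T unfolding first_zero_def by auto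
  then have "continuous_on {y..x} U" using x y by (intro continuous_on_subset[OF cont]) auto
  then obtain z where "y \<le> z" "z \<le> x" "U z = 0"
    using IVT2'[of U x 0 y] \<open>\<not> U x > 0\<close> b(2)[OF y(1,2)] y(3) by force
  then show False using T y x unfolding first_zero_def by force
qed

lemma powr_singular_exponent:
  fixes r p :: real
  assumes "r > 0" "p > 1"
  shows "(r powr (- (2 / (p - 1)))) powr (p + 1) = (r powr (- (2 / (p - 1)))) ^ 2 / r ^ 2"
proof -
  define \<mu> where "\<mu> = 2 / (p - 1)"
  have "\<mu> * (p - 1) = 2" unfolding \<mu>_def using assms by (simp add: field_simps)
  then have "- \<mu> * (p + 1) = - \<mu> + - \<mu> + - 2" by (simp add: algebra_simps)
  then have "(r powr (- \<mu>)) powr (p + 1) = r powr (- \<mu>) * r powr (- \<mu>) * r powr (- 2)"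
    by (simp add: powr_powr flip: powr_add)
  then show ?thesis using assms unfolding \<mu>_def[symmetric] by (simp add: power2_eq_square powr_minus_divide)
qed

lemma energy_le_singular_scale:
  fixes r p u v A B :: real
  assumes r: "r > 0" and p: "p > 1"
    and u: "0 < u" "u \<le> A * r powr (- (2 / (p - 1)))" and v: "\<bar>v\<bar> \<le> B * r powr (- (2 / (p - 1))) / r"
  shows "v ^ 2 / 2 + u powr (p + 1) / (p + 1)
       \<le> (B ^ 2 / 2 + A powr (p + 1) / (p + 1)) * ((r powr (- (2 / (p - 1)))) ^ 2 / r ^ 2)"
proof -
  define X where "X = r powr (- (2 / (p - 1)))"
  have X: "X > 0" unfolding X_def using r by simp
  have A: "A \<ge> 0" using u X_def X by (smt (verit) zero_less_mult_iff)
  have "v ^ 2 \<le> (B * X / r) ^ 2"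
    using v unfolding X_def[symmetric] by (metis abs_ge_zero power2_abs power_mono)
  moreover have "u powr (p + 1) \<le> (A * X) powr (p + 1)"
    using u p unfolding X_def[symmetric] by (intro powr_mono2) auto
  moreover have "(A * X) powr (p + 1) = A powr (p + 1) * (X ^ 2 / r ^ 2)"
    using A X r p by (simp add: powr_mult X_def powr_singular_exponent)
  ultimately have "v ^ 2 / 2 + u powr (p + 1) / (p + 1) \<le> (B * X / r) ^ 2 / 2 + A powr (p + 1) * (X ^ 2 / r ^ 2) / (p + 1)"
    using p by (intro add_mono divide_right_mono) auto
  also have "\<dots> = (B ^ 2 / 2 + A powr (p + 1) / (p + 1)) * (X ^ 2 / r ^ 2)"
    by (simp add: power_divide power_mult_distrib algebra_simps)
  finally show ?thesis unfolding X_def .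
qed

lemma pohozaev_le_power:
  fixes r A B l p :: real
  assumes n: "n \<ge> 2" and r: "0 < r" "r < 1" and l: "l \<ge> 0" and p: "p > 1"
    and u: "0 < U r" "U r \<le> A * r powr (- (2 / (p - 1)))"
    and u': "\<bar>U' r\<bar> \<le> B * r powr (- (2 / (p - 1))) / r"
  shows "pohozaev n l p U U' r
     \<le> ((2 + l) * B ^ 2 / 2 + A * B + (2 + l) * A powr (p + 1) / (p + 1))
        * r powr (real n - 1 - 2 * (2 / (p - 1)))"
proof -
  define X where "X = r powr (- (2 / (p - 1)))"
  define R where "R = r ^ (n - 1)"
  define E where "E = U' r ^ 2 / 2 + U r powr (p + 1) / (p + 1)"
  define c where "c = B ^ 2 / 2 + A powr (p + 1) / (p + 1)"
  have X: "X > 0" unfolding X_def using r by simp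
  have "U r * \<bar>U' r\<bar> \<le> (A * X) * (B * X / r)"
    using u u' unfolding X_def[symmetric] by (intro mult_mono) auto
  moreover have "U r * U' r \<le> U r * \<bar>U' r\<bar>" "0 \<le> U r * \<bar>U' r\<bar>"
    using u by (simp_all add: mult_left_mono)
  ultimately have mixed: "U r * U' r \<le> (A * X) * (B * X / r)" "0 \<le> (A * X) * (B * X / r)"
    by linarith+
  have "0 \<le> E" unfolding E_def using p by simp
  have "pohozaev_weight n l r * E \<le> \<bar>pohozaev_weight n l r\<bar> * E"
    by (rule mult_right_mono[OF abs_ge_self \<open>0 \<le> E\<close>])
  also have "\<dots> \<le> (2 + l) * r * (c * (X ^ 2 / r ^ 2))"
    unfolding E_def c_def X_def
    by (rule mult_mono[OF abs_pohozaev_weight_le energy_le_singular_scale[OF r(1) p u u']])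
      (use n l r pi_ge_two \<open>0 \<le> E\<close> E_def in auto)
  finally have inner: "pohozaev_weight n l r * E + U r * U' r \<le> (2 + l) * r * (c * (X ^ 2 / r ^ 2)) + (A * X) * (B * X / r)"
    using mixed by linarith
  have "0 \<le> c" unfolding c_def using p by simp
  have "r ^ n = r * R" unfolding R_def using n by (metis Suc_diff_1 less_le_trans pos2 power_Suc)
  moreover have "sin r ^ n \<le> r ^ n" using r pi_ge_two by (intro power_mono sin_x_le_x sin_ge_zero) auto
  moreover have "0 \<le> sin r" using r pi_ge_two by (intro sin_ge_zero) auto
  ultimately have w: "0 \<le> sin r ^ n" "sin r ^ n \<le> r * R" by auto
  have "pohozaev n l p U U' r = sin r ^ n * (pohozaev_weight n l r * E + U r * U' r)"
    unfolding pohozaev_def E_def by (simp add: algebra_simps)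
  also have "\<dots> \<le> sin r ^ n * ((2 + l) * r * (c * (X ^ 2 / r ^ 2)) + (A * X) * (B * X / r))"
    using w inner by (intro mult_left_mono) auto
  also have "\<dots> \<le> (r * R) * ((2 + l) * r * (c * (X ^ 2 / r ^ 2)) + (A * X) * (B * X / r))"
    using w mixed(2) \<open>0 \<le> c\<close> l r by (intro mult_right_mono add_nonneg_nonneg[OF _ mixed(2)]) auto
  also have "\<dots> = ((2 + l) * B ^ 2 / 2 + A * B + (2 + l) * A powr (p + 1) / (p + 1)) * (R * X ^ 2)"
  proof -
    have "p + 1 > 0" "r \<noteq> 0" using r p by auto
    then show ?thesis unfolding c_def by (simp add: divide_simps power2_eq_square) algebra
  qed
  also have "R * X ^ 2 = r powr (real n - 1 - 2 * (2 / (p - 1)))"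
    unfolding R_def X_def using r n
    by (simp add: powr_realpow[symmetric] of_nat_diff power2_eq_square flip: powr_add)
  finally show ?thesis .
qed

text \<open>Only \<open>U\<close>, not \<open>U'\<close>, is controlled near \<open>0\<close>; the mean value theorem on \<open>[\<theta>/2, \<theta>]\<close>
  provides points where \<open>U'\<close> is controlled as well, and there the functional is
  \<open>O(\<theta> powr (N - 2 - 4 / (p - 1)))\<close>.\<close>

lemma exists_pohozaev_small_near_zero:
  fixes U U' :: "real \<Rightarrow> real" and l p b A \<epsilon> \<theta>\<^sub>0 :: real
  assumes n: "n \<ge> 2" and l: "l \<ge> 0" and p: "p > 1" and e: "2 * (2 / (p - 1)) < real n - 1"
    and b: "b > 0"
    and der: "\<And>\<theta>. 0 < \<theta> \<Longrightarrow> \<theta> < b \<Longrightarrow> (U has_real_derivative U' \<theta>) (at \<theta>)"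
    and bound: "\<And>\<theta>. 0 < \<theta> \<Longrightarrow> \<theta> < b \<Longrightarrow> 0 < U \<theta> \<and> U \<theta> \<le> A * \<theta> powr (- (2 / (p - 1)))"
    and \<epsilon>: "\<epsilon> > 0" and \<theta>\<^sub>0: "\<theta>\<^sub>0 > 0"
  obtains \<xi> where "0 < \<xi>" "\<xi> < \<theta>\<^sub>0" "pohozaev n l p U U' \<xi> < \<epsilon>"
proof -
  define \<mu> where "\<mu> = 2 / (p - 1)"
  define e where "e = real n - 1 - 2 * \<mu>"
  define B where "B = 2 * A * (1 + 2 powr \<mu>)"
  define K where "K = (2 + l) * B ^ 2 / 2 + A * B + (2 + l) * A powr (p + 1) / (p + 1)"
  have \<mu>: "\<mu> > 0" and "e > 0" using p e unfolding \<mu>_def e_def by auto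
  have "0 < A * (b / 2) powr (- \<mu>)" using bound[of "b / 2"] b unfolding \<mu>_def by auto
  then have "A \<ge> 0" using b by (simp add: zero_less_mult_iff)
  then have "K \<ge> 0" unfolding K_def B_def using l p by auto
  have "((\<lambda>\<theta>. K * \<theta> powr e) \<longlongrightarrow> K * 0 powr e) (at_right 0)"
    by (intro tendsto_intros tendsto_powr')
      (use \<open>e > 0\<close> in \<open>auto simp: eventually_at_right_field intro!: exI[of _ 1]\<close>)
  then have "eventually (\<lambda>\<theta>. K * \<theta> powr e < \<epsilon> \<and> \<theta> < min (min b \<theta>\<^sub>0) 1) (at_right 0)"
    using \<epsilon> b \<theta>\<^sub>0 by (intro eventually_conj order_tendstoD(2))
      (auto simp: eventually_at_right_field intro!: exI[of _ "min (min b \<theta>\<^sub>0) 1"])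
  then obtain \<theta> where \<theta>: "0 < \<theta>" "\<theta> < b" "\<theta> < \<theta>\<^sub>0" "\<theta> < 1" "K * \<theta> powr e < \<epsilon>"
    unfolding eventually_at_right_field
    by (metis field_lbound_gt_zero less_eq_real_def min_less_iff_conj)
  obtain \<xi> where \<xi>: "\<theta> / 2 < \<xi>" "\<xi> < \<theta>" "\<bar>U' \<xi>\<bar> \<le> B * \<xi> powr (- \<mu>) / \<xi>"
    using exists_derivative_bound[of \<theta> \<mu> U U' A] \<theta> \<mu> der bound unfolding B_def \<mu>_def by force
  have "pohozaev n l p U U' \<xi> \<le> K * \<xi> powr e"
    unfolding K_def e_def \<mu>_def
    by (rule pohozaev_le_power[where U = U and U' = U' and A = A, OF n _ _ l p _ _ \<xi>(3)[unfolded \<mu>_def]])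
      (use \<theta> \<xi> bound[of \<xi>] in auto)
  also have "\<dots> \<le> K * \<theta> powr e"
    using \<open>K \<ge> 0\<close> \<open>e > 0\<close> \<theta> \<xi> by (intro mult_left_mono powr_mono2) simp_all
  finally have "pohozaev n l p U U' \<xi> \<le> K * \<theta> powr e" .
  then show ?thesis using \<theta> \<xi> by (intro that[of \<xi>]) auto
qed

lemma no_singular_solution_by_pohozaev:
  fixes U U' U'' :: "real \<Rightarrow> real" and l p T b A :: real
  assumes n: "n \<ge> 2" and l: "l \<ge> 0" and p: "p > 1" and e: "2 * (2 / (p - 1)) < real n - 1"
    and T: "0 < T" "T < pi"
    and dU: "\<And>\<theta>. 0 < \<theta> \<Longrightarrow> \<theta> \<le> T \<Longrightarrow> (U has_real_derivative U' \<theta>) (at \<theta>)"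
    and dU': "\<And>\<theta>. 0 < \<theta> \<Longrightarrow> \<theta> \<le> T \<Longrightarrow> (U' has_real_derivative U'' \<theta>) (at \<theta>)"
    and ode: "\<And>\<theta>. 0 < \<theta> \<Longrightarrow> \<theta> < T \<Longrightarrow> U'' \<theta> + real n * (cos \<theta> / sin \<theta>) * U' \<theta> + U \<theta> powr p = 0"
    and U_pos: "\<And>\<theta>. 0 < \<theta> \<Longrightarrow> \<theta> < T \<Longrightarrow> U \<theta> > 0" and UT: "U T = 0"
    and weight: "pohozaev_weight n l T \<ge> 0"
    and coeff: "\<And>t. 0 < t \<Longrightarrow> t < T \<Longrightarrow> pohozaev_coeff n l t < p + 1"
    and b: "b > 0" and bound: "\<And>\<theta>. 0 < \<theta> \<Longrightarrow> \<theta> < b \<Longrightarrow> U \<theta> \<le> A * \<theta> powr (- (2 / (p - 1)))"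
  shows False
proof -
  define P where "P = pohozaev n l p U U'"
  have decreasing: "P y < P x" if "0 < x" "x < y" "y \<le> T" for x y
  proof (rule DERIV_neg_imp_decreasing_open[OF that(2)])
    fix t assume t: "x < t" "t < y"
    have t': "0 < t" "t < T" using t that by auto
    have "sin t > 0" using t' T by (intro sin_gt_zero) auto
    have "(P has_real_derivative pohozaev_rate n l p (U t) (U' t) t) (at t)"
      unfolding P_def
      by (rule has_real_derivative_pohozaev[OF _ _ _ _ dU dU' ode])
        (use t' n p U_pos[OF t'] \<open>sin t > 0\<close> in auto)
    moreover have "pohozaev_rate n l p (U t) (U' t) t < 0"
      using n p U_pos[OF t'] coeff[OF t'] \<open>sin t > 0\<close> by (intro pohozaev_rate_neg) auto
    ultimately show "\<exists>d. (P has_real_derivative d) (at t) \<and> d < 0" by blast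
  next
    have "continuous_on {x..y} U" "continuous_on {x..y} U'"
      using that by (auto intro!: continuous_at_imp_continuous_on DERIV_isCont[OF dU] DERIV_isCont[OF dU'])
    then show "continuous_on {x..y} P"
      unfolding P_def
      by (rule continuous_on_pohozaev) (use that U_pos UT p in \<open>auto simp: le_less\<close>)
  qed
  define \<theta>\<^sub>1 where "\<theta>\<^sub>1 = min b T / 2"
  have \<theta>\<^sub>1: "0 < \<theta>\<^sub>1" "\<theta>\<^sub>1 < T" using b T unfolding \<theta>\<^sub>1_def by auto
  have "P T \<ge> 0"
    unfolding P_def using UT T weight p by (intro pohozaev_nonneg_at_root sin_ge_zero) auto
  then have "P \<theta>\<^sub>1 > 0" using decreasing[of \<theta>\<^sub>1 T] \<theta>\<^sub>1 by simp
  have "min b T > 0" using b T by simp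
  obtain \<xi> where "0 < \<xi>" "\<xi> < \<theta>\<^sub>1" "P \<xi> < P \<theta>\<^sub>1"
  proof (rule exists_pohozaev_small_near_zero[OF n l p e \<open>min b T > 0\<close> _ _ \<open>P \<theta>\<^sub>1 > 0\<close> \<theta>\<^sub>1(1)])
    fix \<theta> assume "0 < \<theta>" "\<theta> < min b T"
    then show "(U has_real_derivative U' \<theta>) (at \<theta>)" "0 < U \<theta> \<and> U \<theta> \<le> A * \<theta> powr (- (2 / (p - 1)))"
      using dU U_pos bound by auto
  qed (use P_def that in auto)
  then show False using decreasing[of \<xi> \<theta>\<^sub>1] \<theta>\<^sub>1 by simp
qed

lemma first_zero_singular_gt:
  fixes N :: nat and \<delta> p T :: real and U :: "real \<Rightarrow> real"
  assumes N: "N \<ge> 3" and \<delta>: "0 < \<delta>" "\<delta> \<le> pi / 2" and p: "p > pS (real N)"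
    and large: "2 * real N + 4 * (real N - 1) / sin \<delta> ^ (N - 2) < p + 1"
    and U: "singular_solution (real N) p U" and T: "first_zero U T"
  shows "pi - \<delta> < T"
proof (rule ccontr)
  assume "\<not> pi - \<delta> < T"
  define l where "l = 2 / sin \<delta> ^ (N - 2)"
  have l: "l \<ge> 0" using \<delta> sin_gt_zero[of \<delta>] unfolding l_def by auto
  obtain U' U'' where der: "\<forall>\<theta>\<in>{0<..<pi}. (U has_real_derivative U' \<theta>) (at \<theta>) \<and>
      (U' has_real_derivative U'' \<theta>) (at \<theta>) \<and>
      U'' \<theta> + (real N - 1) * (cos \<theta> / sin \<theta>) * U' \<theta> + \<bar>U \<theta>\<bar> powr (p - 1) * U \<theta> = 0"
    using U unfolding singular_solution_def Let_def by blast
  obtain b A where b: "b > 0" and bound: "\<And>\<theta>. 0 < \<theta> \<Longrightarrow> \<theta> < b \<Longrightarrow> 0 < U \<theta> \<and> U \<theta> \<le> A * \<theta> powr (- (2 / (p - 1)))"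
    using singular_solution_bound_near_zero[OF N p U] by blast
  have T': "0 < T" "T < pi" "U T = 0" using T unfolding first_zero_def by auto
  have "continuous_on {0<..<pi} U"
    using der by (intro continuous_at_imp_continuous_on ballI DERIV_isCont) auto
  then have U_pos: "U \<theta> > 0" if "0 < \<theta>" "\<theta> < T" for \<theta>
    using positive_before_first_zero[OF T _ b] bound that by blast
  have p1: "p > 1" and e: "2 * (2 / (p - 1)) < real (N - 1) - 1"
    using above_pS[OF N p] N by (auto simp: of_nat_diff)
  show False
  proof (rule no_singular_solution_by_pohozaev[of "N - 1" l p T U U' U'' b A])
    fix \<theta> assume \<theta>: "0 < \<theta>" "\<theta> < T"
    have "\<bar>U \<theta>\<bar> powr (p - 1) * U \<theta> = U \<theta> powr (p - 1) * U \<theta> powr 1"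
      using U_pos[OF \<theta>] by simp
    also have "\<dots> = U \<theta> powr p" by (simp only: powr_add[symmetric]) simp
    finally show "U'' \<theta> + real (N - 1) * (cos \<theta> / sin \<theta>) * U' \<theta> + U \<theta> powr p = 0"
      using bspec[OF der, of \<theta>] \<theta> T' N by (auto simp: of_nat_diff)
    show "pohozaev_coeff (N - 1) l \<theta> < p + 1"
      using pohozaev_coeff_le[OF l, of "N - 1" \<theta>] large N by (simp add: l_def of_nat_diff algebra_simps)
  next
    have "N - 1 - 1 = N - 2" by simp
    then show "pohozaev_weight (N - 1) l T \<ge> 0"
      unfolding l_def using pohozaev_weight_nonneg_away_from_pi[of "N - 1" \<delta> T] N \<delta> T' \<open>\<not> pi - \<delta> < T\<close>
      by simp
  qed (use N l p1 e T' der U_pos b bound in auto)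
qed

section \<open>Limits of the thresholds\<close>

lemma threshold_ge_of_no_regular_solution:
  fixes N p L c :: real
  assumes L: "0 \<le> L" and c: "c < pi"
    and exists: "\<forall>\<Theta>\<in>{L<..<pi}. \<exists>U. regular_solution N p \<Theta> U"
    and none: "\<And>\<Theta> U. 0 < \<Theta> \<Longrightarrow> \<Theta> \<le> c \<Longrightarrow> \<not> regular_solution N p \<Theta> U"
  shows "c \<le> L"
proof (rule ccontr)
  assume "\<not> c \<le> L"
  then have "(L + c) / 2 \<in> {L<..<pi}" using c by auto
  with exists obtain U where "regular_solution N p ((L + c) / 2) U" by blast
  with none[of "(L + c) / 2" U] L \<open>\<not> c \<le> L\<close> show False by auto
qed

lemma eventually_large_exponent:
  "eventually (\<lambda>p. pS (real N) < p \<and> 2 * real N + 4 * (real N - 1) / sin \<delta> ^ (N - 2) < p + 1) at_top"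
  using eventually_gt_at_top[of "pS (real N)"]
    eventually_gt_at_top[of "2 * real N + 4 * (real N - 1) / sin \<delta> ^ (N - 2)"]
  by eventually_elim auto

lemma regular_threshold_tendsto_pi:
  fixes N :: nat and ThetaL :: "real \<Rightarrow> real"
  assumes N: "N \<ge> 3"
    and ThetaL: "\<And>p. p > pS (real N) \<Longrightarrow> ThetaL p \<in> {0<..<pi} \<and>
           (\<forall>\<Theta>\<in>{ThetaL p<..<pi}. \<exists>U. regular_solution (real N) p \<Theta> U)"
  shows "(ThetaL \<longlongrightarrow> pi) at_top"
proof (rule tendsto_pi_at_top)
  fix \<delta> :: real assume \<delta>: "0 < \<delta>" "\<delta> \<le> pi / 2"
  show "eventually (\<lambda>p. pi - \<delta> \<le> ThetaL p) at_top" using eventually_large_exponent[of N \<delta>]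
  proof eventually_elim
    case (elim p)
    then have p: "pS (real N) < p" "2 * real N + 4 * (real N - 1) / sin \<delta> ^ (N - 2) < p + 1" by auto
    have "0 < p" using above_pS(1)[OF N p(1)] by simp
    show ?case
    proof (rule threshold_ge_of_no_regular_solution)
      show "0 \<le> ThetaL p" "\<forall>\<Theta>\<in>{ThetaL p<..<pi}. \<exists>U. regular_solution (real N) p \<Theta> U"
        using ThetaL[OF p(1)] by auto
      show "pi - \<delta> < pi" using \<delta> by simp
      show "\<not> regular_solution (real N) p \<Theta> U" if "0 < \<Theta>" "\<Theta> \<le> pi - \<delta>" for \<Theta> U
        by (rule no_regular_solution_away_from_pi[OF N \<delta> \<open>0 < p\<close> p(2) that])
    qed
  qed
next
  show "eventually (\<lambda>p. ThetaL p < pi) at_top"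
    by (rule eventually_mono[OF eventually_gt_at_top[of "pS (real N)"]]) (use ThetaL in simp)
qed

lemma first_zero_singular_tendsto_pi:
  fixes N :: nat and ThetaS :: "real \<Rightarrow> real" and Ustar :: "real \<Rightarrow> real \<Rightarrow> real"
  assumes N: "N \<ge> 3"
    and Ustar: "\<And>p. p > pS (real N) \<Longrightarrow> singular_solution (real N) p (Ustar p)"
    and ThetaS: "\<And>p. p > pS (real N) \<Longrightarrow> first_zero (Ustar p) (ThetaS p)"
  shows "(ThetaS \<longlongrightarrow> pi) at_top"
proof (rule tendsto_pi_at_top)
  fix \<delta> :: real assume \<delta>: "0 < \<delta>" "\<delta> \<le> pi / 2"
  show "eventually (\<lambda>p. pi - \<delta> \<le> ThetaS p) at_top"
    by (rule eventually_mono[OF eventually_large_exponent[of N \<delta>]])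
      (blast intro: less_imp_le first_zero_singular_gt[OF N \<delta> _ _ Ustar ThetaS])
next
  show "eventually (\<lambda>p. ThetaS p < pi) at_top"
    by (rule eventually_mono[OF eventually_gt_at_top[of "pS (real N)"]])
      (use ThetaS in \<open>simp add: first_zero_def\<close>)
qed

lemma regular_threshold_3_ge:
  fixes p L :: real
  assumes p: "p > 5" and L: "0 \<le> L" and exists: "\<forall>\<Theta>\<in>{L<..<pi}. \<exists>U. regular_solution 3 p \<Theta> U"
  shows "pi - arcsin (4 / (p - 1)) \<le> L"
proof (rule threshold_ge_of_no_regular_solution[OF L _ exists])
  have "arcsin 0 < arcsin (4 / (p - 1))" using p by (intro arcsin_less_arcsin) auto
  then show "pi - arcsin (4 / (p - 1)) < pi" by simp
  show "\<not> regular_solution 3 p \<Theta> U" if "0 < \<Theta>" "\<Theta> \<le> pi - arcsin (4 / (p - 1))" for \<Theta> U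
    using p that by (intro no_regular_solution_3) auto
qed

theorem theoremD:
  fixes N :: nat and ThetaL ThetaS :: "real \<Rightarrow> real" and Ustar :: "real \<Rightarrow> real \<Rightarrow> real"
  assumes N3: "N \<ge> 3"
    and ThetaL: "\<And>p. p > pS (real N) \<Longrightarrow>
           ThetaL p \<in> {0<..<pi} \<and>
           (\<forall>\<Theta>\<in>{0<..<ThetaL p}. \<not> (\<exists>U. regular_solution (real N) p \<Theta> U)) \<and>
           (\<forall>\<Theta>\<in>{ThetaL p<..<pi}. \<exists>U. regular_solution (real N) p \<Theta> U)"
    and Ustar: "\<And>p. p > pS (real N) \<Longrightarrow> singular_solution (real N) p (Ustar p)"
    and ThetaS: "\<And>p. p > pS (real N) \<Longrightarrow> first_zero (Ustar p) (ThetaS p)"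
  shows "(ThetaL \<longlongrightarrow> pi) at_top \<and> (ThetaS \<longlongrightarrow> pi) at_top \<and>
         (N = 3 \<longrightarrow>
            (\<forall>p\<ge>5. \<forall>\<Theta>\<in>{0<..pi - arcsin (4 / (p - 1))}.
                 \<not> (\<exists>U. regular_solution 3 p \<Theta> U)) \<and>
            (\<forall>p>5. ThetaL p \<ge> pi - arcsin (4 / (p - 1))))"
proof (intro conjI impI)
  show "(ThetaL \<longlongrightarrow> pi) at_top"
    by (rule regular_threshold_tendsto_pi[OF N3]) (use ThetaL in blast)
  show "(ThetaS \<longlongrightarrow> pi) at_top"
    by (rule first_zero_singular_tendsto_pi[OF N3 Ustar ThetaS])
  assume N: "N = 3"
  show "\<forall>p\<ge>5. \<forall>\<Theta>\<in>{0<..pi - arcsin (4 / (p - 1))}. \<not> (\<exists>U. regular_solution 3 p \<Theta> U)"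
    using no_regular_solution_3 by simp
  show "\<forall>p>5. ThetaL p \<ge> pi - arcsin (4 / (p - 1))"
  proof (intro allI impI)
    fix p :: real assume "p > 5"
    then have "pS (real N) < p" unfolding N pS_def by simp
    with \<open>p > 5\<close> show "ThetaL p \<ge> pi - arcsin (4 / (p - 1))"
      using ThetaL N by (intro regular_threshold_3_ge) force+
  qed
qed

end
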